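(* Assume $\mu_1>\mu_a$ for all $a\in\{2,\dots,K\}$ and $c_1,\dots,c_K>0$. Let $(x_2^*,\dots,x_K^* )\in[0,\infty)^{K-1}$ be a maximizer of \[ (x_2,\dots,x_K)\mapsto\frac{\min_{a\neq1}g_a(x_a)}{c_1+c_2x_2+\cdots+c_Kx_K}. \] Then $g_a(x_a^* )=g_b(x_b^* )$ for all $a,b\in\{2,\dots,K\}$.
   Context: Rewards belong to a one-parameter natural exponential family parametrized by the mean; $d(\mu,\mu')$ is the KL divergence between members with means $\mu,\mu'$. For $\alpha\in[0,1]$, $I_\alpha(x,y)=\alpha\,d(x,\alpha x+(1-\alpha)y)+(1-\alpha)\,d(y,\alpha x+(1-\alpha)y)$. For $a\in\{2,\dots,K\}$ and $x\ge0$, $g_a(x)=(1+x)I_{1/(1+x)}(\mu_1,\mu_a)$; $g_a$ is a continuous strictly increasing bijection from $[0,\infty)$ onto $[0,d(\mu_1,\mu_a))$. *)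

theory Defs
  imports "HOL-Analysis.Analysis"
begin

text \<open>A one-parameter natural exponential family: base measure nu on the reals,
  natural parameter space Theta (open interval), cumulant (log-partition) function
  b with b(theta) = ln (integral of exp(theta x) d nu), mean function b' = derivative
  of b, and b'' = derivative of b' (the variance, positive for a nondegenerate family).\<close>

definition nef :: "real measure \<Rightarrow> real set \<Rightarrow> (real \<Rightarrow> real) \<Rightarrow> (real \<Rightarrow> real) \<Rightarrow> (real \<Rightarrow> real) \<Rightarrow> bool" where
  "nef nu \<Theta> b b' b'' \<longleftrightarrow>
     sets nu = sets borel \<and> open \<Theta> \<and> is_interval \<Theta> \<and> \<Theta> \<noteq> {} \<and>
     (\<forall>\<theta>\<in>\<Theta>. integrable nu (\<lambda>x. exp (\<theta> * x)) \<and> b \<theta> = ln (\<integral>x. exp (\<theta> * x) \<partial>nu)) \<and>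
     (\<forall>\<theta>\<in>\<Theta>. (b has_real_derivative b' \<theta>) (at \<theta>)) \<and>
     (\<forall>\<theta>\<in>\<Theta>. (b' has_real_derivative b'' \<theta>) (at \<theta>) \<and> b'' \<theta> > 0)"

definition nat_param :: "real set \<Rightarrow> (real \<Rightarrow> real) \<Rightarrow> real \<Rightarrow> real" where
  "nat_param \<Theta> b' \<mu> = the_inv_into \<Theta> b' \<mu>"

text \<open>KL divergence between the members with means mu and mu' (closed form for an NEF).\<close>
definition kl :: "real set \<Rightarrow> (real \<Rightarrow> real) \<Rightarrow> (real \<Rightarrow> real) \<Rightarrow> real \<Rightarrow> real \<Rightarrow> real" where
  "kl \<Theta> b b' \<mu> \<mu>' =
     (let t = nat_param \<Theta> b' \<mu>; t' = nat_param \<Theta> b' \<mu>' in b t' - b t - \<mu> * (t' - t))"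

definition I_alpha :: "real set \<Rightarrow> (real \<Rightarrow> real) \<Rightarrow> (real \<Rightarrow> real) \<Rightarrow> real \<Rightarrow> real \<Rightarrow> real \<Rightarrow> real" where
  "I_alpha \<Theta> b b' \<alpha> x y =
     \<alpha> * kl \<Theta> b b' x (\<alpha> * x + (1 - \<alpha>) * y) + (1 - \<alpha>) * kl \<Theta> b b' y (\<alpha> * x + (1 - \<alpha>) * y)"

definition g_fun :: "real set \<Rightarrow> (real \<Rightarrow> real) \<Rightarrow> (real \<Rightarrow> real) \<Rightarrow> (nat \<Rightarrow> real) \<Rightarrow> nat \<Rightarrow> real \<Rightarrow> real" where
  "g_fun \<Theta> b b' \<mu> a x = (1 + x) * I_alpha \<Theta> b b' (1 / (1 + x)) (\<mu> 1) (\<mu> a)"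

end

theory Submission
  imports Defs
begin

text \<open>The mean map \<open>b'\<close> is a strictly increasing homeomorphism from \<open>\<Theta>\<close> onto an interval of
  means, so the divergence \<open>d(\<mu>, \<mu>')\<close> is continuous in \<open>\<mu>'\<close> and positive for \<open>\<mu> \<noteq> \<mu>'\<close>
  (strict convexity of \<open>b\<close>). Hence each \<open>g\<^sub>a\<close> vanishes at 0 and is positive and continuous on
  \<open>(0, \<infinity>)\<close>, and only these properties are needed: comparison with \<open>x = (1, \<dots>, 1)\<close> shows
  that the optimal value, and so the minimum at the maximizer, is positive. If some \<open>g\<^sub>a(x\<^sub>a\<^sup>*)\<close>
  exceeded this minimum, then \<open>x\<^sub>a\<^sup>* > 0\<close>, and lowering \<open>x\<^sub>a\<^sup>*\<close> slightly would keep the minimum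
  while strictly decreasing the cost in the denominator, contradicting maximality.\<close>

lemma nef_atLeastAtMost_subset:
  assumes "nef nu \<Theta> b b' b''" "s \<in> \<Theta>" "t \<in> \<Theta>"
  shows "{s..t} \<subseteq> \<Theta>"
proof -
  have "is_interval \<Theta>" using assms(1) unfolding nef_def by blast
  show ?thesis
  proof
    fix x assume "x \<in> {s..t}"
    then show "x \<in> \<Theta>" using mem_is_interval_1_I[OF \<open>is_interval \<Theta>\<close> assms(2,3)] by simp
  qed
qed

lemma nef_mean_strict_mono:
  assumes N: "nef nu \<Theta> b b' b''"
  shows "strict_mono_on \<Theta> b'"
proof (rule strict_mono_onI)
  fix s t assume st: "s \<in> \<Theta>" "t \<in> \<Theta>" "s < t"
  show "b' s < b' t"
  proof (rule DERIV_pos_imp_increasing[OF \<open>s < t\<close>])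
    fix x assume "s \<le> x" "x \<le> t"
    then have "x \<in> \<Theta>" using nef_atLeastAtMost_subset[OF N st(1,2)] by auto
    then show "\<exists>y. DERIV b' x :> y \<and> y > 0" using N unfolding nef_def by blast
  qed
qed

lemma nat_param_mean:
  assumes "nef nu \<Theta> b b' b''" "t \<in> \<Theta>"
  shows "nat_param \<Theta> b' (b' t) = t"
  unfolding nat_param_def
  using the_inv_into_f_f[OF strict_mono_on_imp_inj_on[OF nef_mean_strict_mono[OF assms(1)]] assms(2)] .

lemma isCont_nat_param:
  assumes N: "nef nu \<Theta> b b' b''" and t: "t \<in> \<Theta>"
  shows "isCont (nat_param \<Theta> b') (b' t)"
proof -
  have "open \<Theta>" using N unfolding nef_def by blast
  then obtain e where e: "e > 0" "ball t e \<subseteq> \<Theta>" using t by (rule openE)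
  have near: "z \<in> \<Theta>" if "\<bar>z - t\<bar> \<le> e / 2" for z
    using that e by (intro subsetD[OF e(2)]) (auto simp: dist_real_def abs_minus_commute)
  show ?thesis
  proof (rule isCont_inverse_function[where f = b' and x = t and d = "e / 2"])
    fix z assume "\<bar>z - t\<bar> \<le> e / 2"
    then show "nat_param \<Theta> b' (b' z) = z" using nat_param_mean[OF N] near by blast
  next
    fix z assume "\<bar>z - t\<bar> \<le> e / 2"
    then have "z \<in> \<Theta>" by (rule near)
    then show "isCont b' z" using N unfolding nef_def by (blast intro: DERIV_isCont)
  qed (use e in simp)
qed

lemma convex_nef_means:
  assumes N: "nef nu \<Theta> b b' b''"
  shows "convex (b' ` \<Theta>)"
proof -
  have "continuous_on \<Theta> b'"
    using N unfolding nef_def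
    by (intro continuous_at_imp_continuous_on ballI) (blast intro: DERIV_isCont)
  moreover have "connected \<Theta>"
    using N is_interval_connected unfolding nef_def by blast
  ultimately have "connected (b' ` \<Theta>)" by (rule connected_continuous_image)
  then show ?thesis by (simp add: is_interval_convex_1[symmetric] is_interval_connected_1)
qed

lemma nef_cumulant_secant_bounds:
  assumes N: "nef nu \<Theta> b b' b''" and st: "s \<in> \<Theta>" "t \<in> \<Theta>" "s < t"
  shows "b' s * (t - s) < b t - b s" and "b t - b s < b' t * (t - s)"
proof -
  have sub: "{s..t} \<subseteq> \<Theta>" by (rule nef_atLeastAtMost_subset[OF N st(1,2)])
  have "\<And>x. s \<le> x \<Longrightarrow> x \<le> t \<Longrightarrow> DERIV b x :> b' x"
    using N sub unfolding nef_def by auto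
  then obtain z where z: "s < z" "z < t" "b t - b s = (t - s) * b' z"
    using MVT2[OF \<open>s < t\<close>] by blast
  have "z \<in> \<Theta>" using sub z by auto
  then have "b' s < b' z" "b' z < b' t"
    using strict_mono_onD[OF nef_mean_strict_mono[OF N]] st z by auto
  then have "b' s * (t - s) < b' z * (t - s)" "b' z * (t - s) < b' t * (t - s)"
    using \<open>s < t\<close> by (auto intro: mult_strict_right_mono)
  moreover have "b t - b s = b' z * (t - s)" using z(3) by (simp only: mult.commute)
  ultimately show "b' s * (t - s) < b t - b s" and "b t - b s < b' t * (t - s)" by simp_all
qed

lemma kl_natural_params:
  assumes "nef nu \<Theta> b b' b''" "t \<in> \<Theta>" "t' \<in> \<Theta>"
  shows "kl \<Theta> b b' (b' t) (b' t') = b t' - b t - b' t * (t' - t)"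
  unfolding kl_def Let_def using nat_param_mean[OF assms(1)] assms(2,3) by simp

lemma kl_pos:
  assumes N: "nef nu \<Theta> b b' b''"
    and "\<mu> \<in> b' ` \<Theta>" "\<mu>' \<in> b' ` \<Theta>" "\<mu> \<noteq> \<mu>'"
  shows "kl \<Theta> b b' \<mu> \<mu>' > 0"
proof -
  obtain t t' where t: "t \<in> \<Theta>" "\<mu> = b' t" and t': "t' \<in> \<Theta>" "\<mu>' = b' t'"
    using assms(2,3) by blast
  have "t \<noteq> t'" using assms(4) t t' by auto
  then consider "t < t'" | "t' < t" by linarith
  then show ?thesis
  proof cases
    case 1
    then show ?thesis
      using nef_cumulant_secant_bounds(1)[OF N t(1) t'(1)] kl_natural_params[OF N t(1) t'(1)] t'(2) t(2)
      by simp
  next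
    case 2
    then show ?thesis
      using nef_cumulant_secant_bounds(2)[OF N t'(1) t(1)] kl_natural_params[OF N t(1) t'(1)] t'(2) t(2)
      by (simp add: algebra_simps)
  qed
qed

lemma kl_nonneg:
  assumes "nef nu \<Theta> b b' b''" "\<mu> \<in> b' ` \<Theta>" "\<mu>' \<in> b' ` \<Theta>"
  shows "kl \<Theta> b b' \<mu> \<mu>' \<ge> 0"
  using kl_pos[OF assms] by (cases "\<mu> = \<mu>'") (auto simp: kl_def Let_def)

lemma isCont_kl:
  assumes N: "nef nu \<Theta> b b' b''" and "\<mu>' \<in> b' ` \<Theta>"
  shows "isCont (kl \<Theta> b b' \<mu>) \<mu>'"
proof -
  obtain t where t: "t \<in> \<Theta>" "\<mu>' = b' t" using assms(2) by blast
  have np: "isCont (nat_param \<Theta> b') (b' t)" by (rule isCont_nat_param[OF N t(1)])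
  have "isCont b t" using N t(1) unfolding nef_def by (blast intro: DERIV_isCont)
  then have "isCont b (nat_param \<Theta> b' (b' t))" using nat_param_mean[OF N t(1)] by simp
  then have "isCont (\<lambda>u. b (nat_param \<Theta> b' u)) (b' t)" by (rule isCont_o2[OF np])
  then show ?thesis unfolding kl_def Let_def t(2) by (intro continuous_intros np)
qed

lemma I_alpha_pos:
  assumes N: "nef nu \<Theta> b b' b''"
    and xy: "x \<in> b' ` \<Theta>" "y \<in> b' ` \<Theta>" "x \<noteq> y" and \<alpha>: "0 < \<alpha>" "\<alpha> < 1"
  shows "I_alpha \<Theta> b b' \<alpha> x y > 0"
proof -
  define m where "m = \<alpha> * x + (1 - \<alpha>) * y"
  have m: "m \<in> b' ` \<Theta>"
    using convexD[OF convex_nef_means[OF N] xy(1,2), of \<alpha> "1 - \<alpha>"] \<alpha> by (simp add: m_def)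
  have "m \<noteq> x"
  proof
    assume "m = x"
    then have "(1 - \<alpha>) * (y - x) = 0" by (simp add: m_def algebra_simps)
    then show False using \<alpha> xy(3) by simp
  qed
  then have "kl \<Theta> b b' x m > 0" using kl_pos[OF N xy(1) m] by simp
  moreover have "kl \<Theta> b b' y m \<ge> 0" by (rule kl_nonneg[OF N xy(2) m])
  ultimately show ?thesis
    unfolding I_alpha_def m_def[symmetric] using \<alpha> by (simp add: add_pos_nonneg)
qed

lemma isCont_I_alpha:
  assumes N: "nef nu \<Theta> b b' b''"
    and xy: "x \<in> b' ` \<Theta>" "y \<in> b' ` \<Theta>" and \<alpha>: "0 \<le> \<alpha>" "\<alpha> \<le> 1"
  shows "isCont (\<lambda>\<alpha>. I_alpha \<Theta> b b' \<alpha> x y) \<alpha>"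
proof -
  let ?m = "\<lambda>\<alpha>. \<alpha> * x + (1 - \<alpha>) * y"
  have "?m \<alpha> \<in> b' ` \<Theta>"
    using convexD[OF convex_nef_means[OF N] xy, of \<alpha> "1 - \<alpha>"] \<alpha> by simp
  then have kl_cont: "isCont (\<lambda>\<alpha>. kl \<Theta> b b' z (?m \<alpha>)) \<alpha>" for z
    by (intro isCont_o2[OF _ isCont_kl[OF N]]) (auto intro!: continuous_intros)
  show ?thesis unfolding I_alpha_def by (intro continuous_intros kl_cont)
qed

lemma g_fun_0: "g_fun \<Theta> b b' \<mu> a 0 = 0"
  unfolding g_fun_def I_alpha_def kl_def Let_def by simp

lemma g_fun_pos:
  assumes "nef nu \<Theta> b b' b''"
    and "\<mu> 1 \<in> b' ` \<Theta>" "\<mu> a \<in> b' ` \<Theta>" "\<mu> 1 \<noteq> \<mu> a" and "x > 0"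
  shows "g_fun \<Theta> b b' \<mu> a x > 0"
  unfolding g_fun_def using \<open>x > 0\<close> by (intro mult_pos_pos I_alpha_pos[OF assms(1-4)]) auto

lemma isCont_g_fun:
  assumes "nef nu \<Theta> b b' b''"
    and "\<mu> 1 \<in> b' ` \<Theta>" "\<mu> a \<in> b' ` \<Theta>" and "x \<ge> 0"
  shows "isCont (g_fun \<Theta> b b' \<mu> a) x"
proof -
  have "isCont (\<lambda>y. 1 / (1 + y)) x" using \<open>x \<ge> 0\<close> by (auto intro!: continuous_intros)
  moreover have "isCont (\<lambda>\<alpha>. I_alpha \<Theta> b b' \<alpha> (\<mu> 1) (\<mu> a)) (1 / (1 + x))"
    using \<open>x \<ge> 0\<close> by (intro isCont_I_alpha[OF assms(1-3)]) auto
  ultimately have "isCont (\<lambda>y. I_alpha \<Theta> b b' (1 / (1 + y)) (\<mu> 1) (\<mu> a)) x"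
    by (rule isCont_o2)
  then show ?thesis unfolding g_fun_def[abs_def] by (intro continuous_intros)
qed

lemma isCont_gt_obtain_left:
  fixes f :: "real \<Rightarrow> real"
  assumes "isCont f x" "m < f x" "0 < x"
  obtains x' where "0 < x'" "x' < x" "m < f x'"
proof -
  have "(f \<longlongrightarrow> f x) (at_left x)"
    using assms(1) unfolding isCont_def filterlim_at_split by simp
  then have "\<forall>\<^sub>F x' in at_left x. m < f x'" using \<open>m < f x\<close> by (rule order_tendstoD(1))
  moreover have "\<forall>\<^sub>F x' in at_left x. x' \<in> {0<..<x}"
    by (rule eventually_at_left_real[OF \<open>0 < x\<close>])
  ultimately have "\<forall>\<^sub>F x' in at_left x. 0 < x' \<and> x' < x \<and> m < f x'"
    by eventually_elim auto
  then show ?thesis using that eventually_happens'[OF trivial_limit_at_left_real] by blast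
qed

definition min_ratio :: "'a set \<Rightarrow> ('a \<Rightarrow> real \<Rightarrow> real) \<Rightarrow> real \<Rightarrow> ('a \<Rightarrow> real) \<Rightarrow> ('a \<Rightarrow> real) \<Rightarrow> real"
  where "min_ratio S G c\<^sub>0 c y = (MIN a\<in>S. G a (y a)) / (c\<^sub>0 + (\<Sum>a\<in>S. c a * y a))"

lemma min_ratio_denominator_pos:
  fixes c y :: "'a \<Rightarrow> real"
  assumes "c\<^sub>0 > 0" "\<And>a. a \<in> S \<Longrightarrow> c a > 0" "\<And>a. a \<in> S \<Longrightarrow> y a \<ge> 0"
  shows "c\<^sub>0 + (\<Sum>a\<in>S. c a * y a) > 0"
proof -
  have "(\<Sum>a\<in>S. c a * y a) \<ge> 0" by (intro sum_nonneg mult_nonneg_nonneg less_imp_le assms(2,3))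
  then show ?thesis using \<open>c\<^sub>0 > 0\<close> by linarith
qed

lemma min_ratio_ge_ones_imp_min_pos:
  fixes G :: "'a \<Rightarrow> real \<Rightarrow> real" and c xs :: "'a \<Rightarrow> real"
  assumes S: "finite S" "S \<noteq> {}" and c: "c\<^sub>0 > 0" "\<And>a. a \<in> S \<Longrightarrow> c a > 0"
    and G_pos: "\<And>a x. a \<in> S \<Longrightarrow> x > 0 \<Longrightarrow> G a x > 0"
    and xs: "\<And>a. a \<in> S \<Longrightarrow> xs a \<ge> 0"
    and ge_ones: "min_ratio S G c\<^sub>0 c (\<lambda>_. 1) \<le> min_ratio S G c\<^sub>0 c xs"
  shows "(MIN a\<in>S. G a (xs a)) > 0"
proof -
  have "(MIN a\<in>S. G a 1) > 0" using S G_pos by simp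
  moreover have "c\<^sub>0 + (\<Sum>a\<in>S. c a * 1) > 0"
    using min_ratio_denominator_pos[OF c, where y = "\<lambda>_. 1"] by simp
  ultimately have "min_ratio S G c\<^sub>0 c (\<lambda>_. 1) > 0" unfolding min_ratio_def by simp
  then have "min_ratio S G c\<^sub>0 c xs > 0" using ge_ones by linarith
  moreover have "c\<^sub>0 + (\<Sum>a\<in>S. c a * xs a) > 0"
    by (rule min_ratio_denominator_pos) (use c xs in auto)
  ultimately show ?thesis unfolding min_ratio_def by (simp add: zero_less_divide_iff)
qed

lemma min_ratio_maximizer_balanced:
  fixes G :: "'a \<Rightarrow> real \<Rightarrow> real" and c xs :: "'a \<Rightarrow> real"
  assumes S: "finite S" "S \<noteq> {}" and c: "c\<^sub>0 > 0" "\<And>a. a \<in> S \<Longrightarrow> c a > 0"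
    and G_0: "\<And>a. a \<in> S \<Longrightarrow> G a 0 = 0"
    and G_pos: "\<And>a x. a \<in> S \<Longrightarrow> x > 0 \<Longrightarrow> G a x > 0"
    and G_cont: "\<And>a x. a \<in> S \<Longrightarrow> x > 0 \<Longrightarrow> isCont (G a) x"
    and xs: "\<And>a. a \<in> S \<Longrightarrow> xs a \<ge> 0"
    and max: "\<And>y. (\<And>a. a \<in> S \<Longrightarrow> y a \<ge> 0) \<Longrightarrow> min_ratio S G c\<^sub>0 c y \<le> min_ratio S G c\<^sub>0 c xs"
    and "a \<in> S"
  shows "G a (xs a) = (MIN a\<in>S. G a (xs a))"
proof (rule ccontr)
  define M where "M = (MIN a\<in>S. G a (xs a))"
  assume "G a (xs a) \<noteq> (MIN a\<in>S. G a (xs a))"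
  moreover have M_le: "M \<le> G a' (xs a')" if "a' \<in> S" for a'
    unfolding M_def using S that by simp
  ultimately have above: "M < G a (xs a)" using \<open>a \<in> S\<close> unfolding M_def by force
  have ones: "min_ratio S G c\<^sub>0 c (\<lambda>_. 1) \<le> min_ratio S G c\<^sub>0 c xs" by (rule max) simp
  have M_pos: "M > 0"
    unfolding M_def using S c G_pos xs ones by (rule min_ratio_ge_ones_imp_min_pos)
  have "xs a \<noteq> 0" using above M_pos G_0[OF \<open>a \<in> S\<close>] by auto
  then have "xs a > 0" using xs[OF \<open>a \<in> S\<close>] by simp
  then obtain x' where x': "0 < x'" "x' < xs a" "M < G a x'"
    using isCont_gt_obtain_left[OF G_cont[OF \<open>a \<in> S\<close>] above] by blast
  define y where "y = xs(a := x')"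
  have y: "y a' \<ge> 0" if "a' \<in> S" for a' using xs that x' by (simp add: y_def)
  let ?D = "\<lambda>y. c\<^sub>0 + (\<Sum>a\<in>S. c a * y a)"
  have min_y: "M \<le> (MIN a\<in>S. G a (y a))"
    using S M_le x'(3) by (auto simp: y_def Min_ge_iff less_imp_le)
  have "(\<Sum>a\<in>S. c a * y a) < (\<Sum>a\<in>S. c a * xs a)"
    using x' c(2) \<open>a \<in> S\<close> by (intro sum_strict_mono_ex1[OF S(1)]) (auto simp: y_def)
  then have D_lt: "?D y < ?D xs" by simp
  have D_y: "?D y > 0" by (rule min_ratio_denominator_pos[OF c y])
  have "min_ratio S G c\<^sub>0 c xs = M / ?D xs" unfolding min_ratio_def M_def ..
  also have "\<dots> < M / ?D y" using D_lt D_y M_pos by (intro divide_strict_left_mono) auto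
  also have "\<dots> \<le> min_ratio S G c\<^sub>0 c y"
    unfolding min_ratio_def using min_y D_y by (intro divide_right_mono) auto
  finally have "min_ratio S G c\<^sub>0 c xs < min_ratio S G c\<^sub>0 c y" .
  moreover have "min_ratio S G c\<^sub>0 c y \<le> min_ratio S G c\<^sub>0 c xs" by (rule max) (rule y)
  ultimately show False by simp
qed

theorem lemma2:
  fixes nu :: "real measure" and \<Theta> :: "real set" and b b' b'' :: "real \<Rightarrow> real"
    and K :: nat and \<mu> c xs :: "nat \<Rightarrow> real"
  assumes "nef nu \<Theta> b b' b''"
    and "K \<ge> 2"
    and "\<forall>a\<in>{1..K}. \<mu> a \<in> b' ` \<Theta>"
    and "\<forall>a\<in>{2..K}. \<mu> 1 > \<mu> a"
    and "\<forall>a\<in>{1..K}. c a > 0"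
    and "\<forall>a\<in>{2..K}. xs a \<ge> 0"
    and "\<forall>y. (\<forall>a\<in>{2..K}. y a \<ge> 0) \<longrightarrow>
           (MIN a\<in>{2..K}. g_fun \<Theta> b b' \<mu> a (y a)) / (c 1 + (\<Sum>a\<in>{2..K}. c a * y a))
           \<le> (MIN a\<in>{2..K}. g_fun \<Theta> b b' \<mu> a (xs a)) / (c 1 + (\<Sum>a\<in>{2..K}. c a * xs a))"
  shows "\<forall>a\<in>{2..K}. \<forall>a'\<in>{2..K}. g_fun \<Theta> b b' \<mu> a (xs a) = g_fun \<Theta> b b' \<mu> a' (xs a')"
proof -
  let ?G = "g_fun \<Theta> b b' \<mu>"
  have means: "\<mu> a \<in> b' ` \<Theta>" if "a \<in> {2..K}" for a using assms(3) that by auto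
  have mean_1: "\<mu> 1 \<in> b' ` \<Theta>" using assms(2,3) by auto
  have distinct: "\<mu> 1 \<noteq> \<mu> a" if "a \<in> {2..K}" for a using assms(4) that by force
  have "?G a (xs a) = (MIN a\<in>{2..K}. ?G a (xs a))" if "a \<in> {2..K}" for a
  proof (rule min_ratio_maximizer_balanced
      [where S = "{2..K}" and G = ?G and xs = xs and c\<^sub>0 = "c 1" and c = c])
    show "finite {2..K}" by simp
    show "{2..K} \<noteq> {}" using assms(2) by simp
    show "c 1 > 0" using assms(2,5) by simp
    show "\<And>a. a \<in> {2..K} \<Longrightarrow> c a > 0" using assms(5) by simp
    show "\<And>a. ?G a 0 = 0" by (rule g_fun_0)
    show "\<And>a x. a \<in> {2..K} \<Longrightarrow> x > 0 \<Longrightarrow> ?G a x > 0"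
      by (intro g_fun_pos[where \<mu> = \<mu>, OF assms(1) mean_1] means distinct)
    show "\<And>a x. a \<in> {2..K} \<Longrightarrow> x > 0 \<Longrightarrow> isCont (?G a) x"
      by (intro isCont_g_fun[where \<mu> = \<mu>, OF assms(1) mean_1] means less_imp_le)
    show "\<And>a. a \<in> {2..K} \<Longrightarrow> xs a \<ge> 0" using assms(6) by simp
    show "\<And>y. (\<And>a. a \<in> {2..K} \<Longrightarrow> y a \<ge> 0) \<Longrightarrow>
        min_ratio {2..K} ?G (c 1) c y \<le> min_ratio {2..K} ?G (c 1) c xs"
      using assms(7) unfolding min_ratio_def by blast
    show "a \<in> {2..K}" by (rule that)
  qed
  then show ?thesis by metis
qed

end
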